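(* Let $a$ be a positive integer and for $m\in\mathbb{N}$ let $A_m=\{n\in\mathbb{N}:n<F_m^{1/a}\}$. Then for every $\beta\in[0,1]$, $$\frac{\#\{n\in A_m:\{\mathfrak F^{-1}(n^a)\}\le\beta\}}{\#A_m}=\frac{\phi^{\beta/a}-1}{\phi^{1/a}-1}+O(m\phi^{-m/a})\quad(m\to\infty).$$
   Context: $F$: $F_1=1,F_2=2,F_{n+2}=F_{n+1}+F_n$; $\phi$ is the golden ratio; $\mathfrak F(x)=\frac{\phi}{\sqrt5}(\phi^x+\phi^{-x}\cos(\pi x)\phi^{-2})$, which is increasing on $[1,\infty)$ with $\mathfrak F(n)=F_n$, and $\mathfrak F^{-1}$ is its inverse on $[1,\infty)$; $\{y\}$ is the fractional part of $y$. *)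

theory Defs
  imports Complex_Main "HOL-Library.Landau_Symbols"
begin

text \<open>Fibonacci numbers with F 1 = 1, F 2 = 2, F (n+2) = F (n+1) + F n
  (F 0 = 1 is an auxiliary value irrelevant for the asymptotic statement).\<close>
fun FibF :: "nat \<Rightarrow> nat" where
  "FibF 0 = 1"
| "FibF (Suc 0) = 1"
| "FibF (Suc (Suc n)) = FibF (Suc n) + FibF n"

definition phi :: real where
  "phi = (1 + sqrt 5) / 2"

definition frakF :: "real \<Rightarrow> real" where
  "frakF x = phi / sqrt 5 * (phi powr x + phi powr (-x) * cos (pi * x) * phi powr (-2))"

definition frakF_inv :: "real \<Rightarrow> real" where
  "frakF_inv y = (THE x. 1 \<le> x \<and> frakF x = y)"

definition A_set :: "nat \<Rightarrow> nat \<Rightarrow> nat set" where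
  "A_set a m = {n. 1 \<le> n \<and> real n < real (FibF m) powr (1 / real a)}"

end

(* Since frakF is strictly increasing on [1, oo) and frakF k = F k, the integer part of
   frakF_inv (n^a) is the k with F k <= n^a < F (k+1), and its fractional part is at most beta
   iff moreover n^a <= frakF (k + beta).  So the counted n split into blocks k = 1, ..., m - 1,
   and block k consists, up to one endpoint, of the integers in
   [frakF k ^ (1/a), frakF (k + beta) ^ (1/a)].  As frakF x = (phi / sqrt 5) phi^x + O(1) and
   t |-> t ^ (1/a) is 1-Lipschitz on [1, oo), block k has C q^k (phi^(beta/a) - 1) + O(1)
   elements, where C = (phi / sqrt 5)^(1/a) and q = phi^(1/a).  Summing the geometric series,
   the numerator is r C q^m + O(m) with r = (phi^(beta/a) - 1) / (q - 1), while the
   denominator is C q^m + O(1); the ratio is therefore r + O(m / q^m). *)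

theory Submission
  imports Defs
begin

lemma sqrt5_bounds: "2.2 < sqrt 5" "sqrt 5 < 3"
proof -
  show "2.2 < sqrt 5" by (rule real_less_rsqrt) (simp add: power2_eq_square)
  have "sqrt 5 < sqrt 9" by (simp only: real_sqrt_less_iff)
  also have "sqrt 9 = 3" by (simp add: real_sqrt_unique)
  finally show "sqrt 5 < 3" .
qed

lemma phi_bounds: "1.6 < phi" "phi < 2"
  using sqrt5_bounds unfolding phi_def by simp_all

lemma phi_pos: "phi > 0"
  using phi_bounds by simp

lemma phi_square: "phi\<^sup>2 = phi + 1"
  unfolding phi_def by (simp add: power2_eq_square field_simps)

lemma phi_minus_inverse: "phi - 1 / phi = 1"
  using phi_square phi_pos by (simp add: field_simps power2_eq_square)

lemma phi_plus_inverse: "phi + 1 / phi = sqrt 5"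
  using phi_minus_inverse unfolding phi_def by (simp add: field_simps)

lemma ln_phi_bounds: "0.375 \<le> ln phi" "ln phi < 1"
proof -
  have "ln (1 / phi) \<le> 1 / phi - 1"
    using phi_pos by (intro ln_le_minus_one) simp
  moreover have "1 / phi \<le> 1 / 1.6"
    using phi_bounds by (intro divide_left_mono) auto
  ultimately show "0.375 \<le> ln phi"
    using phi_pos by (simp add: ln_div)
  have "ln phi \<le> phi - 1"
    using phi_pos by (intro ln_le_minus_one)
  then show "ln phi < 1"
    using phi_bounds by simp
qed

lemma frakF_eq: "frakF x = phi / sqrt 5 * (phi powr x + phi powr (- x - 2) * cos (pi * x))"
  using phi_pos by (simp add: frakF_def powr_diff powr_minus_divide)

lemma frakF_add_two: "frakF (x + 2) = frakF (x + 1) + frakF x"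
proof -
  have cos_shift: "cos (pi * (x + 1)) = - cos (pi * x)" "cos (pi * (x + 2)) = cos (pi * x)"
    by (simp_all add: distrib_left cos_add)
  have "phi powr (x + 2) = phi powr (x + 1) + phi powr x"
    using phi_pos phi_square by (simp add: powr_add power2_eq_square algebra_simps)
  moreover have "phi powr (- x - 2) = phi powr (- x - 3) + phi powr (- x - 4)"
  proof -
    have "phi powr (- x - 3) = phi powr (- x - 4) * phi powr 1"
         "phi powr (- x - 2) = phi powr (- x - 4) * phi powr 2"
      by (simp_all only: powr_add[symmetric]) (simp_all add: algebra_simps)
    then show ?thesis
      using phi_square phi_pos by (simp add: powr_numeral algebra_simps)
  qed
  ultimately show ?thesis
    unfolding frakF_eq cos_shift by (simp add: algebra_simps add_divide_distrib)
qed

lemma frakF_0: "frakF 0 = 1"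
  using phi_plus_inverse phi_pos
  by (simp add: frakF_eq powr_minus_divide power2_eq_square field_simps)

lemma frakF_1: "frakF 1 = 1"
proof -
  have "phi * (phi - 1 / phi ^ 3) = (phi - 1 / phi) * (phi + 1 / phi)"
    using phi_pos by (simp add: field_simps power3_eq_cube)
  then show ?thesis
    using phi_plus_inverse phi_minus_inverse phi_pos
    by (simp add: frakF_eq powr_diff powr_minus_divide field_simps)
qed

lemma frakF_of_nat: "frakF (real n) = real (FibF n)"
proof (induction n rule: FibF.induct)
  case (3 n)
  then show ?case
    using frakF_add_two[of "real n"] by (simp add: add.commute)
qed (simp_all add: frakF_0 frakF_1)

lemma frakF_has_derivative:
  "(frakF has_real_derivative phi / sqrt 5 * (ln phi * phi powr x
     - phi powr (- x - 2) * (ln phi * cos (pi * x) + pi * sin (pi * x)))) (at x)"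
proof -
  define c where "c = phi / sqrt 5"
  have eq: "frakF = (\<lambda>x. c * (phi powr x + phi powr (- x - 2) * cos (pi * x)))"
    using frakF_eq unfolding c_def by blast
  show ?thesis
    unfolding eq c_def[symmetric] using phi_pos
    by (auto intro!: derivative_eq_intros simp: algebra_simps)
qed

text \<open>This makes the derivative of \<open>frakF\<close> positive on \<open>[1, \<infinity>)\<close>: on \<open>[1, 2]\<close> the
  sine term is nonpositive, and beyond \<open>2\<close> the factor \<open>phi powr (2 * x + 2) \<ge> phi ^ 6 > 16\<close>
  dominates.\<close>
lemma ln_phi_cos_plus_pi_sin_less:
  assumes "1 \<le> x"
  shows "ln phi * cos (pi * x) + pi * sin (pi * x) < ln phi * phi powr (2 * x + 2)"
proof (cases "x \<le> 2")
  case True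
  have "sin (pi * x) \<le> 0"
    using True assms sin_le_zero[of "pi * x"] by (cases "x = 2") auto
  then have "pi * sin (pi * x) \<le> 0"
    by (simp add: mult_nonneg_nonpos)
  moreover have "ln phi * cos (pi * x) \<le> ln phi"
    using ln_phi_bounds by (intro mult_left_le) auto
  ultimately have "ln phi * cos (pi * x) + pi * sin (pi * x) \<le> ln phi"
    by linarith
  also have "\<dots> < ln phi * phi powr (2 * x + 2)"
    using ln_phi_bounds gr_one_powr[of phi "2 * x + 2"] phi_bounds assms by simp
  finally show ?thesis .
next
  case False
  have "(16::real) \<le> 1.6 ^ 6"
    by (simp add: eval_nat_numeral)
  also have "\<dots> \<le> phi ^ 6"
    using phi_bounds by (intro power_mono) auto
  also have "\<dots> = phi powr 6"
    using phi_pos by (simp add: powr_numeral)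
  also have "\<dots> \<le> phi powr (2 * x + 2)"
    using False phi_bounds by (intro powr_mono) auto
  finally have "0.375 * 16 \<le> ln phi * phi powr (2 * x + 2)"
    using ln_phi_bounds by (intro mult_mono) auto
  then have "6 \<le> ln phi * phi powr (2 * x + 2)"
    by simp
  moreover have "ln phi * cos (pi * x) + pi * sin (pi * x) \<le> ln phi + pi"
    using ln_phi_bounds by (intro add_mono mult_left_le) auto
  ultimately show ?thesis
    using ln_phi_bounds pi_less_4 by linarith
qed

lemma frakF_less:
  assumes "1 \<le> x" "x < y"
  shows "frakF x < frakF y"
  using assms(2)
proof (rule DERIV_pos_imp_increasing)
  fix z assume "x \<le> z"
  then have "phi powr (- z - 2) * (ln phi * cos (pi * z) + pi * sin (pi * z))
      < phi powr (- z - 2) * (ln phi * phi powr (2 * z + 2))"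
    using ln_phi_cos_plus_pi_sin_less[of z] assms(1) phi_pos by simp
  also have "\<dots> = ln phi * phi powr z"
    by (simp flip: powr_add)
  finally show "\<exists>d. (frakF has_real_derivative d) (at z) \<and> 0 < d"
    using frakF_has_derivative phi_pos by force
qed

lemma frakF_less_iff: "1 \<le> x \<Longrightarrow> 1 \<le> y \<Longrightarrow> frakF x < frakF y \<longleftrightarrow> x < y"
  by (metis frakF_less not_less_iff_gr_or_eq order_less_asym)

lemma frakF_le_iff: "1 \<le> x \<Longrightarrow> 1 \<le> y \<Longrightarrow> frakF x \<le> frakF y \<longleftrightarrow> x \<le> y"
  by (meson frakF_less_iff not_less)

lemma frakF_ge_one: "1 \<le> x \<Longrightarrow> 1 \<le> frakF x"
  using frakF_le_iff[of 1 x] frakF_1 by simp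

lemma FibF_ge: "1 \<le> FibF n" "n \<le> FibF n"
  by (induction n rule: FibF.induct) auto

lemma mono_FibF: "mono FibF"
proof (rule mono_iff_le_Suc[THEN iffD2], rule allI)
  show "FibF n \<le> FibF (Suc n)" for n
    by (induction n rule: FibF.induct) auto
qed

lemma frakF_inv:
  assumes "1 \<le> t"
  shows frakF_inv_ge_one: "1 \<le> frakF_inv t" and frakF_frakF_inv: "frakF (frakF_inv t) = t"
proof -
  define b where "b = nat \<lceil>t\<rceil>"
  have "t \<le> real b"
    unfolding b_def by linarith
  also have "real b \<le> frakF (real b)"
    using FibF_ge(2)[of b] by (simp add: frakF_of_nat)
  finally have "t \<le> frakF (real b)" .
  moreover have "continuous_on {1..real b} frakF"
    using frakF_has_derivative by (meson DERIV_isCont continuous_at_imp_continuous_on)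
  ultimately obtain x where x: "1 \<le> x" "frakF x = t"
    using IVT'[of frakF 1 t "real b"] assms frakF_1 \<open>t \<le> real b\<close> by auto
  moreover have "z = x" if "1 \<le> z" "frakF z = t" for z
    using that x frakF_less[of z x] frakF_less[of x z] by (cases z x rule: linorder_cases) auto
  ultimately have "\<exists>!x. 1 \<le> x \<and> frakF x = t"
    by blast
  then have "1 \<le> frakF_inv t \<and> frakF (frakF_inv t) = t"
    unfolding frakF_inv_def by (rule theI')
  then show "1 \<le> frakF_inv t" and "frakF (frakF_inv t) = t"
    by auto
qed

lemma frac_frakF_inv_le_iff:
  assumes "1 \<le> t" "0 \<le> \<beta>"
  shows "frac (frakF_inv t) \<le> \<beta> \<longleftrightarrow>
    (\<exists>k\<ge>1. real (FibF k) \<le> t \<and> t < real (FibF (Suc k)) \<and> t \<le> frakF (real k + \<beta>))"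
proof -
  define y where "y = frakF_inv t"
  have y: "1 \<le> y" "frakF y = t"
    unfolding y_def using frakF_inv_ge_one frakF_frakF_inv assms(1) by auto
  have interval_iff: "real (FibF k) \<le> t \<and> t < real (FibF (Suc k)) \<longleftrightarrow> \<lfloor>y\<rfloor> = int k" if "1 \<le> k" for k
    using that y frakF_le_iff[of "real k" y] frakF_less_iff[of y "real (Suc k)"]
      frakF_of_nat[of k] frakF_of_nat[of "Suc k"]
    by (simp add: floor_eq_iff add.commute)
  have piece_iff: "t \<le> frakF (real k + \<beta>) \<longleftrightarrow> y \<le> real k + \<beta>" if "1 \<le> k" for k
    using that y assms(2) frakF_le_iff[of y "real k + \<beta>"] by simp
  have "frac y \<le> \<beta> \<longleftrightarrow> (\<exists>k\<ge>1. \<lfloor>y\<rfloor> = int k \<and> y \<le> real k + \<beta>)"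
  proof
    assume "frac y \<le> \<beta>"
    then show "\<exists>k\<ge>1. \<lfloor>y\<rfloor> = int k \<and> y \<le> real k + \<beta>"
      using y(1) by (intro exI[of _ "nat \<lfloor>y\<rfloor>"]) (auto simp: frac_def le_nat_iff)
  qed (auto simp: frac_def)
  then show ?thesis
    unfolding y_def[symmetric] using interval_iff piece_iff by auto
qed

lemma powr_diff_le_diff:
  fixes s t p :: real
  assumes "0 \<le> p" "p \<le> 1" "1 \<le> s" "s \<le> t"
  shows "t powr p - s powr p \<le> t - s"
proof -
  have "s - s powr p \<le> t - t powr p"
  proof (rule DERIV_nonneg_imp_nondecreasing[OF assms(4)])
    fix x assume "s \<le> x"
    then have "x powr (p - 1) \<le> x powr 0"
      using assms by (intro powr_mono) auto
    then have "p * x powr (p - 1) \<le> 1"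
      using assms \<open>s \<le> x\<close> by (simp add: mult_le_one)
    moreover have "((\<lambda>x. x - x powr p) has_real_derivative 1 - p * x powr (p - 1)) (at x)"
      using assms \<open>s \<le> x\<close> by (auto intro!: derivative_eq_intros has_real_derivative_powr)
    ultimately show "\<exists>d. ((\<lambda>x. x - x powr p) has_real_derivative d) (at x) \<and> 0 \<le> d"
      by auto
  qed
  then show ?thesis
    by simp
qed

lemma abs_powr_diff_le:
  fixes s t p :: real
  assumes "0 \<le> p" "p \<le> 1" "1 \<le> s" "1 \<le> t"
  shows "\<bar>t powr p - s powr p\<bar> \<le> \<bar>t - s\<bar>"
  using powr_diff_le_diff[of p s t] powr_diff_le_diff[of p t s] powr_mono2[of p s t] powr_mono2[of p t s]
    assms by (cases "s \<le> t") auto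

lemma frakF_minus_main_term: "1 \<le> x \<Longrightarrow> \<bar>frakF x - phi / sqrt 5 * phi powr x\<bar> \<le> 1"
proof -
  assume "1 \<le> x"
  then have "phi powr (- x - 2) \<le> phi powr 0"
    using phi_bounds by (intro powr_mono) auto
  moreover have "phi / sqrt 5 \<le> 1"
    using phi_bounds sqrt5_bounds by simp
  ultimately have "phi / sqrt 5 * (phi powr (- x - 2) * \<bar>cos (pi * x)\<bar>) \<le> 1 * (1 * 1)"
    using phi_pos by (intro mult_mono) auto
  then show ?thesis
    using phi_pos by (simp add: frakF_eq algebra_simps abs_mult)
qed

lemma frakF_powr_approx:
  assumes "0 \<le> p" "p \<le> 1" "1 \<le> x"
  shows "\<bar>frakF x powr p - (phi / sqrt 5) powr p * phi powr (p * x)\<bar> \<le> 1"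
proof -
  have "1 \<le> phi / sqrt 5 * phi"
    using phi_square sqrt5_bounds by (simp add: power2_eq_square phi_def field_simps)
  also have "\<dots> \<le> phi / sqrt 5 * phi powr x"
    using phi_bounds assms(3) powr_mono[of 1 x phi] by (intro mult_left_mono) auto
  finally have main_ge_one: "1 \<le> phi / sqrt 5 * phi powr x" .
  have "(phi / sqrt 5 * phi powr x) powr p = (phi / sqrt 5) powr p * phi powr (p * x)"
    using phi_pos by (subst powr_mult) (auto simp: powr_powr mult.commute)
  then show ?thesis
    using abs_powr_diff_le[OF assms(1,2) main_ge_one frakF_ge_one[OF assms(3)]]
      frakF_minus_main_term[OF assms(3)] by simp
qed

lemma FibF_powr_approx:
  fixes a m :: nat
  assumes "0 < a" "1 \<le> m"
  shows "\<bar>real (FibF m) powr (1 / a) - (phi / sqrt 5) powr (1 / a) * (phi powr (1 / a)) ^ m\<bar> \<le> 1"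
proof -
  have "phi powr (1 / a * real m) = (phi powr (1 / a)) ^ m"
    using phi_pos by (subst powr_power) auto
  then show ?thesis
    using frakF_powr_approx[of "1 / a" "real m"] frakF_of_nat[of m] assms by simp
qed

lemma card_nat_between:
  assumes "0 \<le> u" "u \<le> v"
    and "{n. u \<le> real n \<and> real n < v} \<subseteq> S" "S \<subseteq> {n. u \<le> real n \<and> real n \<le> v}"
  shows "\<bar>real (card S) - (v - u)\<bar> \<le> 1"
proof -
  have closed: "{n. u \<le> real n \<and> real n \<le> v} = {nat \<lceil>u\<rceil>..nat \<lfloor>v\<rfloor>}"
    using assms(1,2) by (auto simp: le_nat_iff nat_le_iff ceiling_le_iff le_floor_iff)
  have half_open: "{n. u \<le> real n \<and> real n < v} = {nat \<lceil>u\<rceil>..<nat \<lceil>v\<rceil>}"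
    using assms(1,2) by (auto simp: le_nat_iff ceiling_le_iff zless_nat_eq_int_zless less_ceiling_iff)
  have "real (card S) \<le> card {nat \<lceil>u\<rceil>..nat \<lfloor>v\<rfloor>}"
    using assms(4) unfolding closed by (intro of_nat_mono card_mono) auto
  moreover have "real (card {nat \<lceil>u\<rceil>..<nat \<lceil>v\<rceil>}) \<le> card S"
    using assms(3,4) unfolding closed half_open
    by (intro of_nat_mono card_mono) (auto intro: finite_subset)
  moreover have "real (card {nat \<lceil>u\<rceil>..nat \<lfloor>v\<rfloor>}) \<le> v - u + 1"
    using assms(1,2) by (simp add: of_nat_diff) linarith
  moreover have "v - u - 1 \<le> real (card {nat \<lceil>u\<rceil>..<nat \<lceil>v\<rceil>})"
    using assms(1,2) by (simp add: of_nat_diff) linarith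
  ultimately show ?thesis
    by linarith
qed

lemma le_powr_inverse_iff:
  fixes x t :: real
  assumes "0 < a" "0 \<le> x" "0 \<le> t"
  shows "x \<le> t powr (1 / real a) \<longleftrightarrow> x ^ a \<le> t"
    and "x < t powr (1 / real a) \<longleftrightarrow> x ^ a < t"
    and "t powr (1 / real a) \<le> x \<longleftrightarrow> t \<le> x ^ a"
  using assms real_root_le_iff[of a "x ^ a" t] real_root_less_iff[of a "x ^ a" t]
    real_root_le_iff[of a t "x ^ a"]
  by (simp_all add: root_powr_inverse[symmetric] real_root_power_cancel)

lemma A_set_eq: "0 < a \<Longrightarrow> A_set a m = {n. 1 \<le> n \<and> n ^ a < FibF m}"
  unfolding A_set_def using le_powr_inverse_iff(2)[of a "real _" "real (FibF m)"]
  by (simp flip: of_nat_power)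

text \<open>The \<open>n\<close> for which \<open>frakF_inv (n ^ a)\<close> has integer part \<open>k\<close> and fractional part
  at most \<open>\<beta>\<close>.\<close>
definition fib_block :: "nat \<Rightarrow> real \<Rightarrow> nat \<Rightarrow> nat set" where
  "fib_block a \<beta> k =
    {n. FibF k \<le> n ^ a \<and> n ^ a < FibF (Suc k) \<and> real (n ^ a) \<le> frakF (real k + \<beta>)}"

lemma frac_le_set_eq_Union_fib_block:
  assumes "0 < a" "0 \<le> \<beta>"
  shows "{n \<in> A_set a m. frac (frakF_inv (real (n ^ a))) \<le> \<beta>} = (\<Union>k\<in>{1..<m}. fib_block a \<beta> k)"
proof -
  have "frac (frakF_inv (real (n ^ a))) \<le> \<beta> \<and> n ^ a < FibF m \<longleftrightarrow> (\<exists>k\<in>{1..<m}. n \<in> fib_block a \<beta> k)"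
    if "1 \<le> n" for n
  proof -
    have "1 \<le> real (n ^ a)"
      using that by simp
    then have "frac (frakF_inv (real (n ^ a))) \<le> \<beta> \<longleftrightarrow> (\<exists>k\<ge>1. n \<in> fib_block a \<beta> k)"
      using frac_frakF_inv_le_iff[OF _ assms(2)] unfolding fib_block_def
      by (simp only: of_nat_le_iff of_nat_less_iff mem_Collect_eq)
    moreover have "n ^ a < FibF m \<longleftrightarrow> k < m" if "n \<in> fib_block a \<beta> k" for k
      using that monoD[OF mono_FibF, of m k] monoD[OF mono_FibF, of "Suc k" m]
      unfolding fib_block_def by fastforce
    ultimately show ?thesis
      by (metis atLeastLessThan_iff)
  qed
  moreover have "1 \<le> n" if "n \<in> fib_block a \<beta> k" for n k
    using that FibF_ge(1)[of k] assms(1) by (cases n) (auto simp: fib_block_def power_0_left)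
  ultimately show ?thesis
    unfolding A_set_eq[OF assms(1)] by blast
qed

lemma card_fib_block:
  assumes "0 < a" "0 \<le> \<beta>" "\<beta> \<le> 1" "1 \<le> k"
  shows "\<bar>real (card (fib_block a \<beta> k))
           - (frakF (real k + \<beta>) powr (1 / real a) - real (FibF k) powr (1 / real a))\<bar> \<le> 1"
proof -
  define u where "u = real (FibF k) powr (1 / real a)"
  define v where "v = frakF (real k + \<beta>) powr (1 / real a)"
  have "real (FibF k) \<le> frakF (real k + \<beta>)"
    and le_F: "frakF (real k + \<beta>) \<le> real (FibF (Suc k))"
    using assms frakF_le_iff[of "real k"] frakF_le_iff[of _ "real (Suc k)"]
    by (simp_all flip: frakF_of_nat)
  then have "0 \<le> u" "u \<le> v"
    unfolding u_def v_def by (auto intro: powr_mono2)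
  have u_le_iff: "u \<le> real n \<longleftrightarrow> FibF k \<le> n ^ a" for n
    unfolding u_def using le_powr_inverse_iff(3)[OF assms(1), of "real n" "real (FibF k)"]
    by (simp flip: of_nat_power)
  have le_v_iff: "real n \<le> v \<longleftrightarrow> real (n ^ a) \<le> frakF (real k + \<beta>)"
    and less_v_iff: "real n < v \<longleftrightarrow> real (n ^ a) < frakF (real k + \<beta>)" for n
    unfolding v_def using le_powr_inverse_iff(1,2)[OF assms(1), of "real n" "frakF (real k + \<beta>)"]
      frakF_ge_one[of "real k + \<beta>"] assms(2,4)
    by simp_all
  have "{n. u \<le> real n \<and> real n < v} \<subseteq> fib_block a \<beta> k"
    unfolding fib_block_def u_le_iff less_v_iff using le_F by (auto simp flip: of_nat_power)
  moreover have "fib_block a \<beta> k \<subseteq> {n. u \<le> real n \<and> real n \<le> v}"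
    unfolding fib_block_def u_le_iff le_v_iff by auto
  ultimately show ?thesis
    using card_nat_between \<open>0 \<le> u\<close> \<open>u \<le> v\<close> unfolding u_def v_def by blast
qed

lemma card_A_set: "0 < a \<Longrightarrow> \<bar>real (card (A_set a m)) - real (FibF m) powr (1 / real a)\<bar> \<le> 2"
  using card_nat_between[of 1 "real (FibF m) powr (1 / real a)" "A_set a m"] FibF_ge(1)[of m]
  by (force simp: A_set_def ge_one_powr_ge_zero)

lemma finite_fib_block: "0 < a \<Longrightarrow> finite (fib_block a \<beta> k)"
proof (rule finite_subset)
  assume "0 < a"
  then have "n \<le> n ^ a" for n :: nat
    by (cases "n = 0") (auto intro: self_le_power)
  then show "fib_block a \<beta> k \<subseteq> {..FibF (Suc k)}"
    unfolding fib_block_def by (auto intro: order_trans less_imp_le_nat)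
qed simp

lemma fib_block_disjoint: "i \<noteq> j \<Longrightarrow> fib_block a \<beta> i \<inter> fib_block a \<beta> j = {}"
proof -
  have "fib_block a \<beta> i \<inter> fib_block a \<beta> j = {}" if "i < j" for i j
    using that monoD[OF mono_FibF, of "Suc i" j] by (auto simp: fib_block_def)
  then show "i \<noteq> j \<Longrightarrow> fib_block a \<beta> i \<inter> fib_block a \<beta> j = {}"
    by (metis inf_commute linorder_neqE_nat)
qed

lemma card_fib_block_approx:
  assumes "0 < a" "0 \<le> \<beta>" "\<beta> \<le> 1" "1 \<le> k"
  shows "\<bar>real (card (fib_block a \<beta> k))
           - (phi powr (\<beta> / a) - 1) * ((phi / sqrt 5) powr (1 / a) * (phi powr (1 / a)) ^ k)\<bar> \<le> 3"
proof -
  have "phi powr (1 / a * (real k + \<beta>)) = phi powr (\<beta> / a) * (phi powr (1 / a)) ^ k"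
    using phi_pos by (subst powr_power) (auto simp: distrib_left powr_add)
  then show ?thesis
    using card_fib_block[OF assms] FibF_powr_approx[OF assms(1,4)] assms
      frakF_powr_approx[of "1 / a" "real k + \<beta>"]
    by (simp add: algebra_simps abs_le_iff)
qed

lemma card_frac_le_eq_sum:
  assumes "0 < a" "0 \<le> \<beta>"
  shows "card {n \<in> A_set a m. frac (frakF_inv (real (n ^ a))) \<le> \<beta>}
           = (\<Sum>k\<in>{1..<m}. card (fib_block a \<beta> k))"
  unfolding frac_le_set_eq_Union_fib_block[OF assms]
  using finite_fib_block[OF assms(1)] fib_block_disjoint by (intro card_UN_disjoint) auto

lemma card_frac_le_bigo:
  assumes "0 < a" "0 \<le> \<beta>" "\<beta> \<le> 1"
  shows "(\<lambda>m. real (card {n \<in> A_set a m. frac (frakF_inv (real (n ^ a))) \<le> \<beta>})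
            - (phi powr (\<beta> / a) - 1) / (phi powr (1 / a) - 1)
              * ((phi / sqrt 5) powr (1 / a) * (phi powr (1 / a)) ^ m))
         \<in> O(\<lambda>m. real m)"
proof -
  define q where "q = phi powr (1 / a)"
  define C where "C = (phi / sqrt 5) powr (1 / a)"
  define d where "d = phi powr (\<beta> / a) - 1"
  define T where "T m = real (card {n \<in> A_set a m. frac (frakF_inv (real (n ^ a))) \<le> \<beta>})" for m
  have "1 < q"
    unfolding q_def using phi_bounds assms(1) by (intro gr_one_powr) auto
  have geometric: "(q - 1) * (\<Sum>k\<in>{1..<m}. q ^ k) = q ^ m - q" if "1 \<le> m" for m
    using that by (induction m rule: dec_induct) (simp_all add: algebra_simps)
  have "\<bar>T m - d / (q - 1) * (C * q ^ m)\<bar> \<le> (3 + \<bar>d / (q - 1) * C * q\<bar>) * real m"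
    if "1 \<le> m" for m
  proof -
    define S where "S = (\<Sum>k\<in>{1..<m}. d * (C * q ^ k))"
    define E where "E = d / (q - 1) * C * q"
    have "\<bar>T m - S\<bar> = \<bar>\<Sum>k\<in>{1..<m}. real (card (fib_block a \<beta> k)) - d * (C * q ^ k)\<bar>"
      unfolding T_def S_def card_frac_le_eq_sum[OF assms(1,2)] by (simp add: sum_subtractf)
    also have "\<dots> \<le> (\<Sum>k\<in>{1..<m}. 3)"
      using card_fib_block_approx[OF assms] unfolding d_def C_def q_def
      by (intro order_trans[OF sum_abs] sum_mono) auto
    also have "\<dots> \<le> 3 * real m"
      by simp
    finally have "\<bar>T m - S\<bar> \<le> 3 * real m" .
    have "S = d * C * (\<Sum>k\<in>{1..<m}. q ^ k)"
      unfolding S_def by (simp add: sum_distrib_left mult.assoc)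
    also have "(\<Sum>k\<in>{1..<m}. q ^ k) = (q ^ m - q) / (q - 1)"
      using geometric[OF that] \<open>1 < q\<close> by (simp add: field_simps)
    finally have "d / (q - 1) * (C * q ^ m) = S + E"
      unfolding E_def by (simp add: right_diff_distrib diff_divide_distrib mult_ac)
    then have "\<bar>T m - d / (q - 1) * (C * q ^ m)\<bar> \<le> \<bar>T m - S\<bar> + \<bar>E\<bar>"
      by (simp add: abs_triangle_ineq4 diff_diff_eq[symmetric])
    also have "\<dots> \<le> 3 * real m + \<bar>E\<bar> * real m"
      using \<open>\<bar>T m - S\<bar> \<le> 3 * real m\<close> that mult_left_mono[of 1 "real m" "\<bar>E\<bar>"] by simp
    finally show ?thesis
      unfolding E_def by (simp add: algebra_simps)
  qed
  then have "(\<lambda>m. T m - d / (q - 1) * (C * q ^ m)) \<in> O(\<lambda>m. real m)"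
    by (intro bigoI eventually_sequentiallyI[of 1]) auto
  then show ?thesis
    unfolding T_def d_def q_def C_def .
qed

lemma card_A_set_bigo:
  assumes "0 < a"
  shows "(\<lambda>m. real (card (A_set a m)) - (phi / sqrt 5) powr (1 / a) * (phi powr (1 / a)) ^ m)
         \<in> O(\<lambda>_. 1)"
proof (intro bigoI eventually_sequentiallyI[of 1])
  fix m :: nat assume "1 \<le> m"
  then show "norm (real (card (A_set a m)) - (phi / sqrt 5) powr (1 / a) * (phi powr (1 / a)) ^ m)
      \<le> 3 * norm (1::real)"
    using card_A_set[OF assms, of m] FibF_powr_approx[OF assms] by fastforce
qed

lemma of_nat_smallo_power: "1 < q \<Longrightarrow> (\<lambda>n. real n) \<in> o(\<lambda>n. q ^ n)"
  using lim_n_over_pown[of q] by (intro smalloI_tendsto) auto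

lemma quotient_minus_const_bigo:
  fixes S N G h :: "'a \<Rightarrow> real"
  assumes "(\<lambda>x. S x - r * G x) \<in> O[F](h)" "(\<lambda>x. N x - G x) \<in> O[F](h)"
    and "h \<in> o[F](G)" "eventually (\<lambda>x. 0 < G x) F"
  shows "(\<lambda>x. S x / N x - r) \<in> O[F](\<lambda>x. h x / G x)"
proof -
  have "(\<lambda>x. N x - G x) \<in> o[F](G)"
    using assms(2,3) by (rule landau_o.big_small_trans)
  then have "eventually (\<lambda>x. \<bar>N x - G x\<bar> \<le> 1 / 2 * \<bar>G x\<bar>) F"
    by (auto dest: landau_o.smallD[of _ _ _ "1 / 2"])
  then have N_large: "eventually (\<lambda>x. 0 < G x / 2 \<and> G x / 2 \<le> N x) F"
    using assms(4) by eventually_elim arith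
  have "(\<lambda>x. r * (N x - G x)) \<in> O[F](h)"
    using landau_o.big.mult[OF bigo_const assms(2)] by simp
  with assms(1) have "(\<lambda>x. (S x - r * G x) - r * (N x - G x)) \<in> O[F](h)"
    by (rule sum_in_bigo(2))
  moreover have "eventually (\<lambda>x. norm (1 / N x) \<le> 2 * norm (1 / G x)) F"
    using N_large by eventually_elim (simp add: field_simps)
  then have "(\<lambda>x. 1 / N x) \<in> O[F](\<lambda>x. 1 / G x)"
    by (rule bigoI)
  ultimately have "(\<lambda>x. ((S x - r * G x) - r * (N x - G x)) * (1 / N x)) \<in> O[F](\<lambda>x. h x * (1 / G x))"
    by (rule landau_o.big.mult)
  moreover have "eventually (\<lambda>x. ((S x - r * G x) - r * (N x - G x)) * (1 / N x) = S x / N x - r) F"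
    using N_large by eventually_elim (simp add: field_simps)
  ultimately show ?thesis
    using landau_o.big.in_cong by fastforce
qed

theorem lemma4p9:
  fixes a :: nat and \<beta> :: real
  assumes "a > 0" and "0 \<le> \<beta>" and "\<beta> \<le> 1"
  shows "(\<lambda>m. real (card {n \<in> A_set a m. frac (frakF_inv (real (n ^ a))) \<le> \<beta>})
               / real (card (A_set a m))
             - (phi powr (\<beta> / real a) - 1) / (phi powr (1 / real a) - 1))
         \<in> O(\<lambda>m. real m * phi powr (- real m / real a))"
proof -
  define q where "q = phi powr (1 / a)"
  define C where "C = (phi / sqrt 5) powr (1 / a)"
  have "1 < q" "0 < C"
    unfolding q_def C_def using phi_bounds assms(1) by (auto intro: gr_one_powr)
  have "(\<lambda>_. 1) \<in> O(\<lambda>m. real m)"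
    by (intro bigoI[of _ 1] eventually_sequentiallyI[of 1]) auto
  then have "(\<lambda>m. real (card (A_set a m)) - C * q ^ m) \<in> O(\<lambda>m. real m)"
    using card_A_set_bigo[OF assms(1)] landau_o.big_trans unfolding q_def C_def by blast
  moreover have "(\<lambda>m. real m) \<in> o(\<lambda>m. C * q ^ m)"
    using of_nat_smallo_power[OF \<open>1 < q\<close>] \<open>0 < C\<close> by simp
  ultimately have "(\<lambda>m. real (card {n \<in> A_set a m. frac (frakF_inv (real (n ^ a))) \<le> \<beta>})
               / real (card (A_set a m)) - (phi powr (\<beta> / a) - 1) / (q - 1))
      \<in> O(\<lambda>m. real m / (C * q ^ m))"
    using card_frac_le_bigo[OF assms] \<open>1 < q\<close> \<open>0 < C\<close> unfolding q_def C_def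
    by (intro quotient_minus_const_bigo) auto
  moreover have "real m / (C * q ^ m) = inverse C * (real m * phi powr (- real m / real a))" for m
    unfolding q_def using phi_pos by (simp add: powr_power powr_minus field_simps)
  ultimately show ?thesis
    using \<open>0 < C\<close> unfolding q_def by simp
qed

end
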